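(* Let $\kappa$ be a regular uncountable cardinal with $\kappa^{<\kappa}=\kappa$ and $\gamma^\omega<\kappa$ for all $\gamma<\kappa$, and let $I^i$, $I^i_\alpha$ be as in the context. For every $i<\kappa$, every limit ordinal $\delta<\kappa$ and every $\nu\in I^i$ there is $\beta<\delta$ such that for every $\sigma\in I^i_\delta$ with $\sigma>\nu$ there is $\sigma'\in I^i_\beta$ with $\sigma\ge\sigma'\ge\nu$.
   Context: $I^0$: order $\kappa\times\mathbb Q$ lexicographically; $I^0$ is the set of $f:\omega\to\kappa\times\mathbb Q$, $f(n)=(f_1(n),f_2(n))$, with $\{n\mid f_1(n)\ne0\}$ finite, ordered by comparing at the least $n$ where they differ. Construct linear orders $I^0\subseteq I^1\subseteq\dots\subseteq I^i\subseteq\dots$ ($i<\kappa$): given $I^i$, for each $\nu\in I^i$ add a new element $\nu^{i+1}$ realizing $tp_{bs}(\nu,I^i\setminus\{\nu\},I^i)\cup\{x<\nu\}$, i.e. $\nu^{i+1}<\nu$ and for every $\tau\in I^i\setminus\{\nu\}$, $\tau<\nu^{i+1}$ iff $\tau<\nu$ (for distinct $\nu,\mu$, $\nu^{i+1}<\mu^{i+1}$ iff $\nu<\mu$); $I^{i+1}=I^i\cup\{\nu^{i+1}\mid\nu\in I^i\}$; at limits $I^i=\bigcup_{j<i}I^j$. Representations: $I^0_\alpha=\{\nu\in I^0\mid \nu_1(n)<\alpha\text{ for all }n<\omega\}$; $I^{i+1}_\alpha=I^i_\alpha\cup\{\nu^{i+1}\mid\nu\in I^i_\alpha\}$; for limit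 $i$, $I^i_\alpha=\bigcup_{j<i}I^j_\alpha$. *)

theory Defs
  imports Complex_Main "HOL-Library.Countable_Set"
begin

(* kappa is represented by a type 'k :: wellorder whose order is an initial ordinal
   (card_order of the relation kord); elements of 'k are the ordinals below kappa. *)

definition kord :: "('k::wellorder) rel" where
  "kord = {(x, y). x \<le> y}"

definition kzero :: "'k::wellorder" where
  "kzero = (LEAST x. True)"

definition is_limit :: "'k::wellorder \<Rightarrow> bool" where
  "is_limit d \<longleftrightarrow> d \<noteq> kzero \<and> (\<forall>b<d. \<exists>c. b < c \<and> c < d)"

definition lexKQ :: "('k::wellorder) \<times> rat \<Rightarrow> 'k \<times> rat \<Rightarrow> bool" where
  "lexKQ p q \<longleftrightarrow> fst p < fst q \<or> (fst p = fst q \<and> snd p < snd q)"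

definition I0 :: "(nat \<Rightarrow> ('k::wellorder) \<times> rat) set" where
  "I0 = {f. finite {n. fst (f n) \<noteq> kzero}}"

definition lessI0 :: "(nat \<Rightarrow> ('k::wellorder) \<times> rat) \<Rightarrow> (nat \<Rightarrow> 'k \<times> rat) \<Rightarrow> bool" where
  "lessI0 f g \<longleftrightarrow> (\<exists>n. (\<forall>m<n. f m = g m) \<and> lexKQ (f n) (g n))"

definition I0rep :: "'k::wellorder \<Rightarrow> (nat \<Rightarrow> 'k \<times> rat) set" where
  "I0rep a = {f \<in> I0. \<forall>n. fst (f n) < a}"

(* Elements of the I^i: Base f is f in I^0; Lift v j is the new element v^{j+1}
   added at stage j+1 for v in I^j. *)
datatype 'k elem = Base "nat \<Rightarrow> 'k \<times> rat" | Lift "'k elem" 'k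

(* membership in I^i (I^{i+1} = I^i u {v^{i+1}}, unions at limits) *)
fun inI :: "'k::wellorder \<Rightarrow> 'k elem \<Rightarrow> bool" where
  "inI i (Base f) \<longleftrightarrow> f \<in> I0"
| "inI i (Lift v j) \<longleftrightarrow> j < i \<and> inI j v"

fun inIrep :: "'k::wellorder \<Rightarrow> 'k \<Rightarrow> 'k elem \<Rightarrow> bool" where
  "inIrep i a (Base f) \<longleftrightarrow> f \<in> I0rep a"
| "inIrep i a (Lift v j) \<longleftrightarrow> j < i \<and> inIrep j a v"

(* the linear order on the I^i, following the construction:
   for tau old (in I^j), tau < v^{j+1} iff tau < v; v^{j+1} < tau iff v <= tau;
   v^{j+1} < mu^{j+1} iff v < mu *)
function lessE :: "('k::wellorder) elem \<Rightarrow> 'k elem \<Rightarrow> bool" where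
  "lessE (Base f) (Base g) = lessI0 f g"
| "lessE (Base f) (Lift u k) = lessE (Base f) u"
| "lessE (Lift v j) (Base g) = (lessE v (Base g) \<or> v = Base g)"
| "lessE (Lift v j) (Lift u k) =
     (if j = k then lessE v u
      else if j < k then lessE (Lift v j) u
      else (lessE v (Lift u k) \<or> v = Lift u k))"
  by pat_completeness auto
termination
  by (relation "measure (\<lambda>(x, y). size x + size y)") auto

definition leE :: "('k::wellorder) elem \<Rightarrow> 'k elem \<Rightarrow> bool" where
  "leE x y \<longleftrightarrow> lessE x y \<or> x = y"

end

theory Submission
  imports Defs
begin

text \<open>Lifting never moves an element across an element of \<open>I\<^sup>0\<close>, so elements of \<open>I\<^sup>i\<close>
  obtained from different elements of \<open>I\<^sup>0\<close> (their bases) are ordered as their bases.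
  Given \<open>\<nu>\<close> with base \<open>g\<close>, choose \<open>\<beta> < \<delta>\<close> above the finitely many first coordinates of \<open>g\<close>
  that lie below \<open>\<delta>\<close>. For \<open>\<sigma> > \<nu>\<close> with base \<open>f\<close>, either \<open>f = g\<close> and \<open>\<nu>\<close> itself lies in
  \<open>I\<^sup>i\<^sub>\<beta>\<close>, or \<open>g < f\<close> first differ at some \<open>n\<close>; then truncating \<open>g\<close> after \<open>n\<close> and raising its
  rational at \<open>n\<close> slightly (staying below that of \<open>f\<close> if the first coordinates agree) gives
  an element of \<open>I\<^sup>0\<^sub>\<beta>\<close> between \<open>\<nu>\<close> and \<open>\<sigma>\<close>.\<close>

fun base_of :: "'k elem \<Rightarrow> nat \<Rightarrow> 'k \<times> rat" where
  "base_of (Base f) = f"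
| "base_of (Lift v j) = base_of v"

lemma lessE_iff_lessI0_base_of:
  "base_of x \<noteq> base_of y \<Longrightarrow> lessE x y \<longleftrightarrow> lessI0 (base_of x) (base_of y)"
proof (induction x y rule: lessE.induct)
  case (4 v j u k)
  then show ?case by (auto split: if_splits)
qed auto

lemma lessI0_irrefl: "\<not> lessI0 f f"
  by (auto simp: lessI0_def lexKQ_def)

lemma lessE_if_lessI0_base_of: "lessI0 (base_of x) (base_of y) \<Longrightarrow> lessE x y"
  using lessE_iff_lessI0_base_of lessI0_irrefl by metis

lemma base_of_in_I0: "inI i x \<Longrightarrow> base_of x \<in> I0"
  by (induction x arbitrary: i) auto

lemma base_of_in_I0rep: "inIrep i a x \<Longrightarrow> base_of x \<in> I0rep a"
  by (induction x arbitrary: i) auto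

lemma inIrep_if_base_of_in_I0rep: "inI i x \<Longrightarrow> base_of x \<in> I0rep a \<Longrightarrow> inIrep i a x"
  by (induction x arbitrary: i) auto

lemma kzero_le: "kzero \<le> (x::'k::wellorder)"
  unfolding kzero_def by (rule Least_le) simp

lemma kzero_less_limit: "is_limit d \<Longrightarrow> kzero < d"
  using kzero_le[of d] by (auto simp: is_limit_def order_le_less)

lemma finite_fst_range_I0:
  assumes "g \<in> I0"
  shows "finite (fst ` range g)"
proof -
  have "fst ` range g \<subseteq> insert kzero (fst ` g ` {n. fst (g n) \<noteq> kzero})"
    by auto
  moreover have "finite {n. fst (g n) \<noteq> kzero}"
    using assms by (simp add: I0_def)
  ultimately show ?thesis
    by (meson finite_imageI finite_insert finite_subset)
qed

lemma limit_bounds_finite_set: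
  fixes d :: "'k::wellorder"
  assumes "finite C" and "is_limit d"
  shows "\<exists>b<d. kzero < b \<and> (\<forall>c\<in>C. c < d \<longrightarrow> c < b)"
proof -
  let ?M = "Max (insert kzero {c \<in> C. c < d})"
  have fin: "finite (insert kzero {c \<in> C. c < d})"
    using assms(1) by simp
  have "?M < d"
    using Max_in[OF fin] kzero_less_limit[OF assms(2)] by auto
  then obtain b where "?M < b" "b < d"
    using assms(2) by (auto simp: is_limit_def)
  moreover have "c < b" if "c \<in> insert kzero {c \<in> C. c < d}" for c
    using Max_ge[OF fin that] \<open>?M < b\<close> by simp
  ultimately show ?thesis
    by auto
qed

lemma lessI0_interpolate:
  assumes gf: "lessI0 g f" and f: "f \<in> I0rep d" and "kzero < b"
    and g_bound: "\<And>m. fst (g m) < d \<Longrightarrow> fst (g m) < b"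
  shows "\<exists>h \<in> I0rep b. lessI0 g h \<and> lessI0 h f"
proof -
  obtain n where eq: "\<forall>m<n. g m = f m" and lx: "lexKQ (g n) (f n)"
    using gf by (auto simp: lessI0_def)
  obtain q where q1: "snd (g n) < q" and q2: "fst (g n) = fst (f n) \<longrightarrow> q < snd (f n)"
  proof (cases "fst (g n) = fst (f n)")
    case True
    then have "snd (g n) < snd (f n)"
      using lx by (simp add: lexKQ_def)
    then show ?thesis
      using that dense by blast
  next
    case False
    then show ?thesis
      using that[of "snd (g n) + 1"] by simp
  qed
  define h where "h m = (if m < n then g m else if m = n then (fst (g n), q) else (kzero, 0))" for m
  have f_bound: "fst (f m) < d" for m
    using f by (simp add: I0rep_def)
  have "fst (g n) < d"
    using lx f_bound[of n] by (auto simp: lexKQ_def)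
  then have "fst (h m) < b" for m
    using g_bound[of m] g_bound[of n] eq f_bound[of m] \<open>kzero < b\<close> by (auto simp: h_def)
  moreover have "{m. fst (h m) \<noteq> kzero} \<subseteq> {..n}"
    by (auto simp: h_def)
  then have "h \<in> I0"
    unfolding I0_def using finite_subset by blast
  moreover have "lessI0 g h"
    unfolding lessI0_def by (rule exI[of _ n]) (auto simp: h_def lexKQ_def q1)
  moreover have "lessI0 h f"
    unfolding lessI0_def by (rule exI[of _ n]) (use eq lx q2 in \<open>auto simp: h_def lexKQ_def\<close>)
  ultimately show ?thesis
    by (auto simp: I0rep_def)
qed

theorem mainTheorem10:
  fixes i d :: "'k::wellorder" and v :: "'k elem"
  assumes kcard: "card_order (kord :: 'k rel)"
    and kreg: "regularCard (kord :: 'k rel)"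
    and kunc: "\<not> countable (UNIV :: 'k set)"
    and kpow: "\<forall>A :: 'k set. (card_of A, kord :: 'k rel) \<in> ordLess \<longrightarrow> (card_of (Func A (UNIV :: 'k set)), kord :: 'k rel) \<in> ordLeq"
    and komega: "\<forall>A :: 'k set. (card_of A, kord :: 'k rel) \<in> ordLess \<longrightarrow> (card_of (Func (UNIV :: nat set) A), kord :: 'k rel) \<in> ordLess"
    and dlim: "is_limit d"
    and vI: "inI i v"
  shows "\<exists>b<d. \<forall>s. inIrep i d s \<and> lessE v s \<longrightarrow>
            (\<exists>s'. inIrep i b s' \<and> leE s' s \<and> leE v s')"
proof -
  let ?g = "base_of v"
  obtain b where "b < d" "kzero < b" and range_bound: "\<forall>c \<in> fst ` range ?g. c < d \<longrightarrow> c < b"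
    using limit_bounds_finite_set[OF finite_fst_range_I0[OF base_of_in_I0[OF vI]] dlim] by blast
  have g_bound: "fst (?g m) < b" if "fst (?g m) < d" for m
    using range_bound that by simp
  have "\<exists>s'. inIrep i b s' \<and> leE s' s \<and> leE v s'" if s: "inIrep i d s" "lessE v s" for s
  proof (cases "base_of s = ?g")
    case True
    then have "\<forall>m. fst (?g m) < b"
      using base_of_in_I0rep[OF s(1)] g_bound by (simp add: I0rep_def)
    then have "inIrep i b v"
      using inIrep_if_base_of_in_I0rep[OF vI] base_of_in_I0[OF vI] by (simp add: I0rep_def)
    then show ?thesis
      using s(2) unfolding leE_def by blast
  next
    case False
    then have "lessI0 ?g (base_of s)"
      using lessE_iff_lessI0_base_of[of v s] s(2) by simp
    then obtain h where "h \<in> I0rep b" "lessI0 ?g h" "lessI0 h (base_of s)"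
      using lessI0_interpolate base_of_in_I0rep[OF s(1)] \<open>kzero < b\<close> g_bound by blast
    then have "inIrep i b (Base h)" "lessE (Base h) s" "lessE v (Base h)"
      by (simp_all add: lessE_if_lessI0_base_of)
    then show ?thesis
      unfolding leE_def by blast
  qed
  then show ?thesis
    using \<open>b < d\<close> by blast
qed

end
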